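(* Let $1<\alpha<2$ and let $N\ge 3$ be an integer. Define, for $1\le i\le N-1$, $$\widetilde b_{i,i}=2\big[(i+1)^{3-\alpha}-2(3-\alpha)i^{2-\alpha}-(i-1)^{3-\alpha}\big]+2\big[(N-i+1)^{3-\alpha}-2(3-\alpha)(N-i)^{2-\alpha}-(N-i-1)^{3-\alpha}\big],$$ and for $1\le i\le N-2$, $$\widetilde b_{i,i+1}=-2\big[(i+1)^{3-\alpha}-i^{3-\alpha}\big]+(3-\alpha)\big[(i+1)^{2-\alpha}+i^{2-\alpha}\big]-2\big[(N-i)^{3-\alpha}-(N-i-1)^{3-\alpha}\big]+(3-\alpha)\big[(N-i)^{2-\alpha}+(N-i-1)^{2-\alpha}\big].$$ Let $B_h=(b_{i,j})_{i,j=1}^{N-1}$ be the symmetric matrix with $b_{i,i}=8-2^{4-\alpha}+\widetilde b_{i,i}$ ($1\le i\le N-1$), $b_{i,i+1}=b_{i+1,i}=-7-3^{3-\alpha}+2^{5-\alpha}+\widetilde b_{i,i+1}$ ($1\le i\le N-2$), and, for $m=|j-i|\ge 2$, $$b_{i,j}=-(m+2)^{3-\alpha}+4(m+1)^{3-\alpha}-6m^{3-\alpha}+4(m-1)^{3-\alpha}-(m-2)^{3-\alpha}.$$ Then: (1) $b_{i,j}<0$ for all $j\neq i$, $\widetilde b_{i,i+1}<0$ for $1\le i\le N-2$, and $\widetilde b_{i,i}<0$ for $1\le i\le N-1$; (2) for every $1\le i\le N-1$, $\sum_{j=1}^{N-1}b_{i,j}>0$ and $b_{i,i}>\sum_{j\neq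 i}|b_{i,j}|>0$.
   Context: Here $0^{p}=0$ for $p>0$. The matrix $B_h$ is (up to the positive factor $\kappa_\alpha/(h^{\alpha-1}\Gamma(4-\alpha))$, $\kappa_\alpha=-1/(2\cos(\alpha\pi/2))$, $h=b/N$) the stiffness matrix of the piecewise linear finite element discretization on the uniform mesh $x_i=ih$ of $(0,b)$ of the one-dimensional fractional Laplacian $C_\alpha\int_{0}^{b}\frac{u(x)-u(y)}{|x-y|^{1+\alpha}}dy$ with zero exterior condition. *)

theory Defs
  imports "HOL-Analysis.Analysis"
begin

text \<open>Note: real powr satisfies 0 powr p = 0, matching the convention 0^p = 0 for p > 0.
All bases below are nonnegative.\<close>

definition btil_diag :: "real \<Rightarrow> nat \<Rightarrow> nat \<Rightarrow> real" where
  "btil_diag \<alpha> N i =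
     2 * ((real i + 1) powr (3 - \<alpha>) - 2 * (3 - \<alpha>) * (real i) powr (2 - \<alpha>)
          - (real i - 1) powr (3 - \<alpha>))
   + 2 * ((real N - real i + 1) powr (3 - \<alpha>) - 2 * (3 - \<alpha>) * (real N - real i) powr (2 - \<alpha>)
          - (real N - real i - 1) powr (3 - \<alpha>))"

definition btil_off :: "real \<Rightarrow> nat \<Rightarrow> nat \<Rightarrow> real" where
  "btil_off \<alpha> N i =
     - (2 * ((real i + 1) powr (3 - \<alpha>) - (real i) powr (3 - \<alpha>)))
     + (3 - \<alpha>) * ((real i + 1) powr (2 - \<alpha>) + (real i) powr (2 - \<alpha>))
     - 2 * ((real N - real i) powr (3 - \<alpha>) - (real N - real i - 1) powr (3 - \<alpha>))
     + (3 - \<alpha>) * ((real N - real i) powr (2 - \<alpha>) + (real N - real i - 1) powr (2 - \<alpha>))"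

definition bentry :: "real \<Rightarrow> nat \<Rightarrow> nat \<Rightarrow> nat \<Rightarrow> real" where
  "bentry \<alpha> N i j =
     (if i = j then 8 - 2 powr (4 - \<alpha>) + btil_diag \<alpha> N i
      else if j = i + 1 then -7 - 3 powr (3 - \<alpha>) + 2 powr (5 - \<alpha>) + btil_off \<alpha> N i
      else if i = j + 1 then -7 - 3 powr (3 - \<alpha>) + 2 powr (5 - \<alpha>) + btil_off \<alpha> N j
      else (let m = real (if i \<le> j then j - i else i - j) in
        - ((m + 2) powr (3 - \<alpha>)) + 4 * (m + 1) powr (3 - \<alpha>) - 6 * m powr (3 - \<alpha>)
        + 4 * (m - 1) powr (3 - \<alpha>) - (m - 2) powr (3 - \<alpha>)))"

end

theory Submission
  imports Defs
begin

(* Write p = 3 - alpha, so 1 < p < 2, and G(y) = |y|^p.  Off the diagonal the entries are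
   the negated fourth differences -(Delta^4 G)(m - 2), and the corrections btil are
   quadrature errors for the integral of p y^(p-1).  So every sign claim reduces to a fact
   about powers: the fourth derivative p(p-1)(p-2)(p-3) of y^p is positive, y^(p-1) is
   concave, y^(p-2) is convex, and 4 * 2^p - 3^p < 7 for the nearest neighbours.  In a row
   sum the fourth differences telescope to third differences at the two ends of the row,
   so the sum splits into a contribution from each end, each a positive combination of
   second and third differences of powers.  Strict diagonal dominance then follows from
   positive row sums and negative off-diagonal entries. *)

definition fwd_diff :: "(real \<Rightarrow> real) \<Rightarrow> real \<Rightarrow> real" where
  "fwd_diff f = (\<lambda>x. f (x + 1) - f x)"

lemma fwd_diff_2: "(fwd_diff ^^ 2) f x = f (x + 2) - 2 * f (x + 1) + f x"
  by (simp add: fwd_diff_def numeral_eq_Suc algebra_simps)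

lemma fwd_diff_3: "(fwd_diff ^^ 3) f x = f (x + 3) - 3 * f (x + 2) + 3 * f (x + 1) - f x"
  by (simp add: fwd_diff_def numeral_eq_Suc algebra_simps)

lemma fwd_diff_4:
  "(fwd_diff ^^ 4) f x = f (x + 4) - 4 * f (x + 3) + 6 * f (x + 2) - 4 * f (x + 1) + f x"
  by (simp add: fwd_diff_def numeral_eq_Suc algebra_simps)

lemma fwd_diff_pos_of_deriv_pos:
  assumes "continuous_on {x..x + 1} f"
    and "\<And>t. x < t \<Longrightarrow> t < x + 1 \<Longrightarrow> (f has_real_derivative f' t) (at t)"
    and "\<And>t. x < t \<Longrightarrow> t < x + 1 \<Longrightarrow> 0 < f' t"
  shows "0 < fwd_diff f x"
proof -
  have "f x < f (x + 1)"
    by (rule DERIV_pos_imp_increasing_open) (use assms in auto)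
  then show ?thesis by (simp add: fwd_diff_def)
qed

lemma has_real_derivative_fwd_diff:
  assumes "(f has_real_derivative f' (t + 1)) (at (t + 1))"
    and "(f has_real_derivative f' t) (at t)"
  shows "(fwd_diff f has_real_derivative fwd_diff f' t) (at t)"
proof -
  have "((\<lambda>y. f (y + 1)) has_real_derivative f' (t + 1)) (at t)"
    using DERIV_shift assms(1) by blast
  from DERIV_diff[OF this assms(2)] show ?thesis by (simp add: fwd_diff_def)
qed

lemma funpow_fwd_diff_pos:
  fixes D :: "nat \<Rightarrow> real \<Rightarrow> real"
  assumes "1 \<le> n" and "continuous_on {x..x + real n} (D 0)"
    and "\<And>m t. m < n \<Longrightarrow> x < t \<Longrightarrow> t < x + real n \<Longrightarrow>
           (D m has_real_derivative D (Suc m) t) (at t)"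
    and "\<And>t. x < t \<Longrightarrow> t < x + real n \<Longrightarrow> 0 < D n t"
  shows "0 < (fwd_diff ^^ n) (D 0) x"
  using assms
proof (induction n arbitrary: D rule: nat_induct_at_least)
  case base
  then show ?case by (auto intro: fwd_diff_pos_of_deriv_pos)
next
  case (Suc n)
  have "0 < (fwd_diff ^^ n) (fwd_diff (D 0)) x"
  proof (rule Suc.IH[of "\<lambda>m. fwd_diff (D m)"])
    have "continuous_on {x..x + real n} (\<lambda>y. D 0 (y + 1))"
      by (rule continuous_on_compose2[OF Suc.prems(1)]) (auto intro!: continuous_intros)
    moreover have "continuous_on {x..x + real n} (D 0)"
      by (rule continuous_on_subset[OF Suc.prems(1)]) auto
    ultimately show "continuous_on {x..x + real n} (fwd_diff (D 0))"
      unfolding fwd_diff_def by (intro continuous_intros)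
  next
    fix m t assume "m < n" "x < t" "t < x + real n"
    then show "(fwd_diff (D m) has_real_derivative fwd_diff (D (Suc m)) t) (at t)"
      by (intro has_real_derivative_fwd_diff Suc.prems(2)) auto
  next
    fix t assume t: "x < t" "t < x + real n"
    have deriv: "(D n has_real_derivative D (Suc n) s) (at s)" if "t \<le> s" "s \<le> t + 1" for s
      using Suc.prems(2) t that by auto
    show "0 < fwd_diff (D n) t"
    proof (rule fwd_diff_pos_of_deriv_pos[where f' = "D (Suc n)"])
      show "continuous_on {t..t + 1} (D n)"
        by (rule DERIV_atLeastAtMost_imp_continuous_on) (use deriv in blast)
    qed (use deriv Suc.prems(3) t in auto)
  qed
  then show ?case by (simp only: funpow_Suc_right comp_def)
qed

lemma has_real_derivative_powr_iterated:
  fixes p t :: real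
  assumes "0 < t"
  shows "((\<lambda>y. (\<Prod>i<k. p - real i) * y powr (p - real k)) has_real_derivative
          (\<Prod>i<Suc k. p - real i) * t powr (p - real (Suc k))) (at t)"
  using assms by (auto intro!: derivative_eq_intros simp: algebra_simps)

lemma fourth_fwd_diff_powr_pos:
  fixes p x :: real
  assumes "1 < p" "p < 2" "0 \<le> x"
  shows "0 < (fwd_diff ^^ 4) (\<lambda>y. y powr p) x"
proof -
  define D where "D k y = (\<Prod>i<k. p - real i) * y powr (p - real k)" for k y
  have "(\<Prod>i<4. p - real i) = p * (p - 1) * ((2 - p) * (3 - p))"
    by (simp add: numeral_eq_Suc algebra_simps)
  also have "\<dots> > 0"
    using assms by (intro mult_pos_pos) auto
  finally have fourth_deriv_pos: "0 < (\<Prod>i<4. p - real i)" .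
  have "0 < (fwd_diff ^^ 4) (D 0) x"
  proof (rule funpow_fwd_diff_pos)
    show "continuous_on {x..x + real 4} (D 0)"
      using assms unfolding D_def by (auto intro!: continuous_on_mult continuous_on_powr')
  next
    fix m t assume "x < t"
    then show "(D m has_real_derivative D (Suc m) t) (at t)"
      unfolding D_def using assms by (intro has_real_derivative_powr_iterated) auto
  next
    fix t assume "x < t"
    then show "0 < D 4 t"
      using fourth_deriv_pos assms by (simp add: D_def)
  qed simp
  moreover have "D 0 = (\<lambda>y. y powr p)"
    by (simp add: D_def fun_eq_iff)
  ultimately show ?thesis by simp
qed

lemma powr_mean_value:
  fixes a b r :: real
  assumes "0 \<le> a" "a < b" "a = 0 \<Longrightarrow> 0 < r"
  obtains z where "a < z" "z < b" "b powr r - a powr r = (b - a) * (r * z powr (r - 1))"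
proof -
  obtain z where "a < z" "z < b" "b powr r - a powr r = (r * z powr (r - 1)) * (b - a)"
  proof (rule mvt[OF assms(2), where f' = "\<lambda>z h. r * z powr (r - 1) * h"])
    show "continuous_on {a..b} (\<lambda>y. y powr r)"
      using assms by (intro continuous_on_powr') (auto intro: continuous_intros)
    show "((\<lambda>y. y powr r) has_derivative (\<lambda>h. r * y powr (r - 1) * h)) (at y)"
      if "a < y" "y < b" for y
      using has_real_derivative_powr[of y r] that assms by (simp add: has_field_derivative_def)
  qed
  then show ?thesis using that by (simp add: mult.commute)
qed

lemma powr_diff_gt_deriv_at_right:
  fixes a b r :: real
  assumes "0 \<le> a" "a < b" "0 < r" "r < 1"
  shows "(b - a) * (r * b powr (r - 1)) < b powr r - a powr r"
proof -
  obtain z where z: "a < z" "z < b" "b powr r - a powr r = (b - a) * (r * z powr (r - 1))"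
    by (rule powr_mean_value[of a b r]) (use assms in auto)
  have "b powr (r - 1) < z powr (r - 1)"
    using z assms by (intro powr_less_mono2_neg) auto
  then show ?thesis
    unfolding z(3) using assms by (simp add: mult_strict_left_mono)
qed

lemma powr_diff_lt_deriv_at_left:
  fixes a b r :: real
  assumes "0 < a" "a < b" "0 < r" "r < 1"
  shows "b powr r - a powr r < (b - a) * (r * a powr (r - 1))"
proof -
  obtain z where z: "a < z" "z < b" "b powr r - a powr r = (b - a) * (r * z powr (r - 1))"
    by (rule powr_mean_value[of a b r]) (use assms in auto)
  have "z powr (r - 1) < a powr (r - 1)"
    using z assms by (intro powr_less_mono2_neg) auto
  then have "r * z powr (r - 1) < r * a powr (r - 1)"
    using assms(3) by (rule mult_strict_left_mono)
  then show ?thesis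
    unfolding z(3) using assms(2) by (simp add: mult_strict_left_mono)
qed

lemma neg_powr_diff_lt_deriv_at_right:
  fixes a b r :: real
  assumes "0 < a" "a < b" "r < 0"
  shows "b powr r - a powr r < (b - a) * (r * b powr (r - 1))"
proof -
  obtain z where z: "a < z" "z < b" "b powr r - a powr r = (b - a) * (r * z powr (r - 1))"
    by (rule powr_mean_value[of a b r]) (use assms in auto)
  have "b powr (r - 1) < z powr (r - 1)"
    using z assms by (intro powr_less_mono2_neg) auto
  then have "r * z powr (r - 1) < r * b powr (r - 1)"
    using assms(3) by (rule mult_strict_left_mono_neg)
  then show ?thesis
    unfolding z(3) using assms(2) by (simp add: mult_strict_left_mono)
qed

(* b^p - a^p is the integral of the concave function p y^(p-1) over [a, b]: the trapezoid
   rule underestimates it (on [k, k + 1]), the midpoint rule overestimates it (on [k - 1, k + 1]). *)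

lemma powr_trapezoid_lt:
  fixes p k :: real
  assumes "1 < p" "p < 2" "0 \<le> k"
  shows "p * ((k + 1) powr (p - 1) + k powr (p - 1)) < 2 * ((k + 1) powr p - k powr p)"
proof -
  define \<psi> where "\<psi> t = p * t * ((k + t) powr (p - 1) + k powr (p - 1)) - 2 * ((k + t) powr p - k powr p)"
    for t
  have "\<psi> 1 < \<psi> 0"
  proof (rule DERIV_neg_imp_decreasing_open[of 0 1 \<psi>])
    show "continuous_on {0..1} \<psi>"
      unfolding \<psi>_def using assms by (auto intro!: continuous_intros continuous_on_powr')
  next
    fix t :: real assume t: "0 < t" "t < 1"
    have "(\<psi> has_real_derivative
            p * (t * ((p - 1) * (k + t) powr (p - 2)) - ((k + t) powr (p - 1) - k powr (p - 1)))) (at t)"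
      unfolding \<psi>_def using t assms
      by (auto intro!: derivative_eq_intros) (simp add: algebra_simps)
    moreover have "t * ((p - 1) * (k + t) powr (p - 2)) < (k + t) powr (p - 1) - k powr (p - 1)"
      using powr_diff_gt_deriv_at_right[of k "k + t" "p - 1"] t assms by simp
    ultimately show "\<exists>y. (\<psi> has_real_derivative y) (at t) \<and> y < 0"
      using assms by (intro exI conjI) (auto intro!: mult_pos_neg)
  qed simp
  then show ?thesis by (simp add: \<psi>_def)
qed

lemma powr_midpoint_gt:
  fixes p k :: real
  assumes "1 < p" "p < 2" "1 \<le> k"
  shows "(k + 1) powr p - (k - 1) powr p < 2 * p * k powr (p - 1)"
proof -
  define \<psi> where "\<psi> t = (k + t) powr p - (k - t) powr p - 2 * p * t * k powr (p - 1)" for t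
  have "\<psi> 1 < \<psi> 0"
  proof (rule DERIV_neg_imp_decreasing_open[of 0 1 \<psi>])
    show "continuous_on {0..1} \<psi>"
      unfolding \<psi>_def using assms by (auto intro!: continuous_intros continuous_on_powr')
  next
    fix t :: real assume t: "0 < t" "t < 1"
    have "(\<psi> has_real_derivative
            p * (((k + t) powr (p - 1) - k powr (p - 1)) - (k powr (p - 1) - (k - t) powr (p - 1)))) (at t)"
      unfolding \<psi>_def using t assms
      by (auto intro!: derivative_eq_intros) (simp add: algebra_simps)
    moreover have "(k + t) powr (p - 1) - k powr (p - 1) < t * ((p - 1) * k powr (p - 2))"
      using powr_diff_lt_deriv_at_left[of k "k + t" "p - 1"] t assms by simp
    moreover have "t * ((p - 1) * k powr (p - 2)) < k powr (p - 1) - (k - t) powr (p - 1)"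
      using powr_diff_gt_deriv_at_right[of "k - t" k "p - 1"] t assms by simp
    ultimately show "\<exists>y. (\<psi> has_real_derivative y) (at t) \<and> y < 0"
      using assms by (intro exI conjI) (auto intro!: mult_pos_neg)
  qed simp
  then show ?thesis by (simp add: \<psi>_def)
qed

lemma four_two_powr_minus_three_powr_lt:
  fixes p :: real
  assumes "1 < p" "p < 2"
  shows "4 * 2 powr p - 3 powr p < 7"
proof -
  define h where "h s = 4 * 2 powr s - 3 powr s" for s :: real
  have ln_ineq: "9 * ln 3 < 16 * ln (2::real)"
  proof -
    have "ln ((3::real) ^ 9) < ln (2 ^ 16)" by (subst ln_less_cancel_iff) auto
    then show ?thesis by (simp only: ln_realpow of_nat_numeral)
  qed
  have "h p < h 2"
  proof (rule DERIV_pos_imp_increasing[of p 2 h])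
    fix s :: real assume s: "p \<le> s" "s \<le> 2"
    have "(3::real) powr s = 2 powr s * (3/2) powr s"
      by (simp add: powr_mult[symmetric])
    also have "\<dots> \<le> 2 powr s * (3/2) powr 2"
      using s by (intro mult_left_mono powr_mono) auto
    finally have "3 powr s \<le> 2 powr s * (9/4::real)"
      by (simp add: powr_numeral power2_eq_square)
    then have "ln 3 * 3 powr s \<le> (9/4 * ln 3) * 2 powr s"
      by (simp add: mult_left_mono algebra_simps)
    also have "\<dots> < (4 * ln 2) * 2 powr s"
      using ln_ineq by (intro mult_strict_right_mono) auto
    finally have "0 < 4 * (ln 2 * 2 powr s) - ln 3 * 3 powr s"
      by simp
    moreover have "(h has_real_derivative 4 * (ln 2 * 2 powr s) - ln 3 * 3 powr s) (at s)"
      unfolding h_def by (auto intro!: derivative_eq_intros)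
    ultimately show "\<exists>y. (h has_real_derivative y) (at s) \<and> 0 < y" by blast
  qed (use assms in auto)
  then show ?thesis by (simp add: h_def powr_numeral)
qed

lemma powr_third_fwd_diff_lt:
  fixes p x :: real
  assumes "1 < p" "p < 2" "0 \<le> x"
  shows "(fwd_diff ^^ 3) (\<lambda>y. y powr p) x < p * (fwd_diff ^^ 2) (\<lambda>y. y powr (p - 1)) (x + 1)"
proof -
  define g0 where "g0 y = p * (y + 1) powr (p - 1) - ((y + 1) powr p - y powr p)" for y
  define g1 where "g1 y = p * (p - 1) * (y + 1) powr (p - 2) - p * ((y + 1) powr (p - 1) - y powr (p - 1))"
    for y
  define g2 where
    "g2 y = p * (p - 1) * ((p - 2) * (y + 1) powr (p - 3) - ((y + 1) powr (p - 2) - y powr (p - 2)))"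
    for y
  \<comment> \<open>\<open>g0 y\<close> is the error of the right endpoint rule for the integral of \<open>p s powr (p - 1)\<close>
    over \<open>[y, y + 1]\<close>; its second derivative \<open>g2\<close> is positive by convexity of \<open>s powr (p - 2)\<close>.\<close>
  have "0 < (fwd_diff ^^ 2) ([g0, g1, g2] ! 0) x"
  proof (rule funpow_fwd_diff_pos)
    show "continuous_on {x..x + real 2} ([g0, g1, g2] ! 0)"
      using assms unfolding g0_def by (auto intro!: continuous_intros continuous_on_powr')
  next
    fix m :: nat and t assume "m < 2" "x < t"
    then consider "m = 0" | "m = 1" by linarith
    then show "([g0, g1, g2] ! m has_real_derivative ([g0, g1, g2] ! Suc m) t) (at t)"
    proof cases
      case 1
      show ?thesis
        unfolding 1 g0_def g1_def using \<open>x < t\<close> assms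
        by (auto intro!: derivative_eq_intros) (simp add: algebra_simps)
    next
      case 2
      show ?thesis
        unfolding 2 g1_def g2_def using \<open>x < t\<close> assms
        by (auto intro!: derivative_eq_intros) (simp add: algebra_simps)
    qed
  next
    fix t assume "x < t"
    then have "(t + 1) powr (p - 2) - t powr (p - 2) < (p - 2) * (t + 1) powr (p - 3)"
      using neg_powr_diff_lt_deriv_at_right[of t "t + 1" "p - 2"] assms by simp
    then show "0 < ([g0, g1, g2] ! 2) t"
      unfolding g2_def using assms by (simp add: mult_pos_pos)
  qed simp
  moreover have "(fwd_diff ^^ 2) g0 x =
      p * (fwd_diff ^^ 2) (\<lambda>y. y powr (p - 1)) (x + 1) - (fwd_diff ^^ 3) (\<lambda>y. y powr p) x"
  proof -
    have "x + 2 + 1 = x + 3" "x + 1 + 1 = x + 2" "x + 1 + 2 = x + 3"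
      by simp_all
    then show ?thesis
      unfolding fwd_diff_2 fwd_diff_3 g0_def by (simp add: algebra_simps)
  qed
  ultimately show ?thesis by simp
qed

definition toeplitz_coeff :: "real \<Rightarrow> real \<Rightarrow> real" where
  "toeplitz_coeff \<alpha> x = - (fwd_diff ^^ 4) (\<lambda>y. \<bar>y\<bar> powr (3 - \<alpha>)) (x - 2)"

definition toeplitz_tail :: "real \<Rightarrow> real \<Rightarrow> real" where
  "toeplitz_tail \<alpha> k = (fwd_diff ^^ 3) (\<lambda>y. \<bar>y\<bar> powr (3 - \<alpha>)) (- k - 1)"

lemma toeplitz_coeff_minus: "toeplitz_coeff \<alpha> (- x) = toeplitz_coeff \<alpha> x"
proof -
  have "- x - 2 + 4 = - (x - 2)" "- x - 2 + 3 = - (x - 1)" "- x - 2 + 2 = - x"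
    "- x - 2 + 1 = - (x + 1)" "x - 2 + 4 = x + 2" "x - 2 + 3 = x + 1" "x - 2 + 2 = x"
    "x - 2 + 1 = x - 1" "- x - 2 = - (x + 2)"
    by simp_all
  then show ?thesis
    unfolding toeplitz_coeff_def fwd_diff_4 by (simp only: abs_minus_cancel)
qed

lemma toeplitz_coeff_0: "toeplitz_coeff \<alpha> 0 = 8 - 2 powr (4 - \<alpha>)"
proof -
  have "(2::real) powr (4 - \<alpha>) = 2 * 2 powr (3 - \<alpha>)"
    using powr_add[of 2 1 "3 - \<alpha>"] by simp
  then show ?thesis
    by (simp add: toeplitz_coeff_def fwd_diff_4)
qed

lemma two_powr_5_minus: "(2::real) powr (5 - \<alpha>) = 4 * 2 powr (3 - \<alpha>)"
  using powr_add[of 2 2 "3 - \<alpha>"] by (simp add: powr_numeral)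

lemma toeplitz_coeff_1: "toeplitz_coeff \<alpha> 1 = -7 - 3 powr (3 - \<alpha>) + 2 powr (5 - \<alpha>)"
  by (simp add: toeplitz_coeff_def fwd_diff_4 two_powr_5_minus)

lemma toeplitz_coeff_ge_2:
  assumes "2 \<le> x"
  shows "toeplitz_coeff \<alpha> x = - (fwd_diff ^^ 4) (\<lambda>y. y powr (3 - \<alpha>)) (x - 2)"
  using assms by (simp add: toeplitz_coeff_def fwd_diff_4)

lemma toeplitz_coeff_far:
  assumes "2 \<le> m"
  shows "toeplitz_coeff \<alpha> m = - ((m + 2) powr (3 - \<alpha>)) + 4 * (m + 1) powr (3 - \<alpha>)
    - 6 * m powr (3 - \<alpha>) + 4 * (m - 1) powr (3 - \<alpha>) - (m - 2) powr (3 - \<alpha>)"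
proof -
  have "m - 2 + 4 = m + 2" "m - 2 + 3 = m + 1" "m - 2 + 2 = m" "m - 2 + 1 = m - 1"
    by simp_all
  with assms show ?thesis
    by (simp add: toeplitz_coeff_ge_2 fwd_diff_4 add.commute)
qed

lemma toeplitz_coeff_nat_neg:
  assumes "1 < \<alpha>" "\<alpha> < 2" "1 \<le> m"
  shows "toeplitz_coeff \<alpha> (real m) < 0"
proof (cases "m = 1")
  case True
  then show ?thesis
    using four_two_powr_minus_three_powr_lt[of "3 - \<alpha>"] assms
    by (simp add: toeplitz_coeff_1 two_powr_5_minus)
next
  case False
  then have "2 \<le> real m" using assms by simp
  then show ?thesis
    using fourth_fwd_diff_powr_pos[of "3 - \<alpha>" "real m - 2"] assms
    by (simp add: toeplitz_coeff_ge_2)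
qed

definition diag_corr :: "real \<Rightarrow> real \<Rightarrow> real" where
  "diag_corr \<alpha> k =
     (k + 1) powr (3 - \<alpha>) - 2 * (3 - \<alpha>) * k powr (2 - \<alpha>) - (k - 1) powr (3 - \<alpha>)"

definition offdiag_corr :: "real \<Rightarrow> real \<Rightarrow> real" where
  "offdiag_corr \<alpha> k =
     - (2 * ((k + 1) powr (3 - \<alpha>) - k powr (3 - \<alpha>)))
     + (3 - \<alpha>) * ((k + 1) powr (2 - \<alpha>) + k powr (2 - \<alpha>))"

lemma btil_diag_eq:
  "btil_diag \<alpha> N i = 2 * diag_corr \<alpha> (real i) + 2 * diag_corr \<alpha> (real N - real i)"
  unfolding btil_diag_def diag_corr_def by simp

lemma btil_off_eq:
  "btil_off \<alpha> N i = offdiag_corr \<alpha> (real i) + offdiag_corr \<alpha> (real N - real i - 1)"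
  unfolding btil_off_def offdiag_corr_def by simp

lemma diag_corr_neg:
  assumes "1 < \<alpha>" "\<alpha> < 2" "1 \<le> k"
  shows "diag_corr \<alpha> k < 0"
  using powr_midpoint_gt[of "3 - \<alpha>" k] assms by (simp add: diag_corr_def)

lemma offdiag_corr_neg:
  assumes "1 < \<alpha>" "\<alpha> < 2" "0 \<le> k"
  shows "offdiag_corr \<alpha> k < 0"
  using powr_trapezoid_lt[of "3 - \<alpha>" k] assms by (simp add: offdiag_corr_def)

lemma btil_diag_neg:
  assumes "1 < \<alpha>" "\<alpha> < 2" "1 \<le> i" "i < N"
  shows "btil_diag \<alpha> N i < 0"
  using assms by (simp add: btil_diag_eq add_neg_neg diag_corr_neg)

lemma btil_off_neg:
  assumes "1 < \<alpha>" "\<alpha> < 2" "i < N"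
  shows "btil_off \<alpha> N i < 0"
  using assms by (simp add: btil_off_eq add_neg_neg offdiag_corr_neg)

lemma bentry_eq_toeplitz:
  "bentry \<alpha> N i j = toeplitz_coeff \<alpha> (real j - real i)
     + (if j = i then btil_diag \<alpha> N i else 0)
     + (if j = i + 1 then btil_off \<alpha> N i else 0)
     + (if i = j + 1 then btil_off \<alpha> N j else 0)"
proof -
  consider "j = i" | "j = i + 1" | "i = j + 1" | "i + 2 \<le> j" | "j + 2 \<le> i"
    by linarith
  then show ?thesis
  proof cases
    case 1
    then show ?thesis by (simp add: bentry_def toeplitz_coeff_0)
  next
    case 2
    then show ?thesis by (simp add: bentry_def toeplitz_coeff_1)
  next
    case 3
    then have "real j - real i = - 1" by simp
    with 3 show ?thesis by (simp add: bentry_def toeplitz_coeff_minus toeplitz_coeff_1)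
  next
    case 4
    then have "j \<noteq> i" "j \<noteq> i + 1" "i \<noteq> j + 1" "i \<le> j" "2 \<le> real j - real i"
      by auto
    then show ?thesis
      by (simp add: bentry_def toeplitz_coeff_far Let_def)
  next
    case 5
    then have "j \<noteq> i" "j \<noteq> i + 1" "i \<noteq> j + 1" "\<not> i \<le> j" "2 \<le> real i - real j"
      by auto
    moreover have "toeplitz_coeff \<alpha> (real j - real i) = toeplitz_coeff \<alpha> (real i - real j)"
      using toeplitz_coeff_minus[of \<alpha> "real i - real j"] by simp
    ultimately show ?thesis
      by (simp add: bentry_def toeplitz_coeff_far Let_def)
  qed
qed

lemma bentry_offdiag_neg:
  assumes "1 < \<alpha>" "\<alpha> < 2" "i < N" "j < N" "j \<noteq> i"
  shows "bentry \<alpha> N i j < 0"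
proof -
  have "toeplitz_coeff \<alpha> (real j - real i) < 0"
  proof (cases "i < j")
    case True
    then have "real j - real i = real (j - i)" by simp
    then show ?thesis using True assms toeplitz_coeff_nat_neg[of \<alpha> "j - i"] by simp
  next
    case False
    then have "toeplitz_coeff \<alpha> (real j - real i) = toeplitz_coeff \<alpha> (real (i - j))"
      using toeplitz_coeff_minus[of \<alpha> "real (i - j)"] by (simp add: of_nat_diff)
    then show ?thesis using False assms toeplitz_coeff_nat_neg[of \<alpha> "i - j"] by simp
  qed
  moreover have "btil_off \<alpha> N i < 0" if "j = i + 1"
    using that assms by (intro btil_off_neg) auto
  moreover have "btil_off \<alpha> N j < 0" if "i = j + 1"
    using that assms by (intro btil_off_neg) auto
  ultimately show ?thesis
    unfolding bentry_eq_toeplitz using assms by auto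
qed

lemma third_fwd_diff_of_even:
  assumes "\<And>y. f (- y) = f y"
  shows "(fwd_diff ^^ 3) f (- x - 3) = - (fwd_diff ^^ 3) f x"
proof -
  have "- x - 3 + 3 = - x" "- x - 3 + 2 = - (x + 1)" "- x - 3 + 1 = - (x + 2)" "- x - 3 = - (x + 3)"
    by simp_all
  then show ?thesis
    by (simp only: fwd_diff_3 assms)
qed

lemma toeplitz_coeff_eq_third_diff:
  "toeplitz_coeff \<alpha> x = (fwd_diff ^^ 3) (\<lambda>y. \<bar>y\<bar> powr (3 - \<alpha>)) (x - 2)
     - (fwd_diff ^^ 3) (\<lambda>y. \<bar>y\<bar> powr (3 - \<alpha>)) (x - 1)"
proof -
  have "(fwd_diff ^^ 4) f = fwd_diff ((fwd_diff ^^ 3) f)" for f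
    by (simp add: numeral_Bit0 numeral_3_eq_3)
  then show ?thesis
    by (simp add: toeplitz_coeff_def fwd_diff_def)
qed

lemma toeplitz_sum:
  "(\<Sum>j=1..n. toeplitz_coeff \<alpha> (real j - u)) = toeplitz_tail \<alpha> u + toeplitz_tail \<alpha> (real n + 1 - u)"
proof -
  define D where "D j = (fwd_diff ^^ 3) (\<lambda>y. \<bar>y\<bar> powr (3 - \<alpha>)) (real j - u - 2)" for j
  have "(\<Sum>j=1..n. toeplitz_coeff \<alpha> (real j - u)) = - (\<Sum>j=1..n. D (Suc j) - D j)"
    by (simp add: toeplitz_coeff_eq_third_diff D_def sum_negf[symmetric] algebra_simps)
  also have "\<dots> = D 1 - D (Suc n)"
    by (simp add: sum_Suc_diff)
  finally have "(\<Sum>j=1..n. toeplitz_coeff \<alpha> (real j - u)) = D 1 - D (Suc n)" .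
  moreover have "D 1 = toeplitz_tail \<alpha> u"
  proof -
    have "real 1 - u - 2 = - u - 1"
      by simp
    then show ?thesis
      by (simp only: D_def toeplitz_tail_def)
  qed
  moreover have "D (Suc n) = - toeplitz_tail \<alpha> (real n + 1 - u)"
    using third_fwd_diff_of_even[of "\<lambda>y. \<bar>y\<bar> powr (3 - \<alpha>)" "real n - u - 1"]
    by (simp add: D_def toeplitz_tail_def algebra_simps)
  ultimately show ?thesis
    by simp
qed

definition half_row_sum :: "real \<Rightarrow> real \<Rightarrow> real" where
  "half_row_sum \<alpha> k =
     toeplitz_tail \<alpha> k + 2 * diag_corr \<alpha> k + offdiag_corr \<alpha> k + offdiag_corr \<alpha> (k - 1)"

lemma half_row_sum_1: "half_row_sum \<alpha> 1 = (\<alpha> - 1) * (2 - 2 powr (2 - \<alpha>))"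
proof -
  have "(2::real) powr (3 - \<alpha>) = 2 * 2 powr (2 - \<alpha>)"
    using powr_add[of 2 1 "2 - \<alpha>"] by simp
  then show ?thesis
    by (simp add: half_row_sum_def toeplitz_tail_def diag_corr_def offdiag_corr_def fwd_diff_3
        algebra_simps)
qed

lemma half_row_sum_ge_2:
  assumes "2 \<le> k"
  shows "half_row_sum \<alpha> k = (3 - \<alpha>) * (fwd_diff ^^ 2) (\<lambda>y. y powr (2 - \<alpha>)) (k - 1)
           - (fwd_diff ^^ 3) (\<lambda>y. y powr (3 - \<alpha>)) (k - 2)"
proof -
  have "- (k - 2) - 3 = - k - 1"
    by simp
  then have "toeplitz_tail \<alpha> k = - (fwd_diff ^^ 3) (\<lambda>y. \<bar>y\<bar> powr (3 - \<alpha>)) (k - 2)"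
    using third_fwd_diff_of_even[of "\<lambda>y. \<bar>y\<bar> powr (3 - \<alpha>)" "k - 2"]
    by (simp only: toeplitz_tail_def abs_minus_cancel)
  also have "\<dots> = - (fwd_diff ^^ 3) (\<lambda>y. y powr (3 - \<alpha>)) (k - 2)"
    using assms by (simp add: fwd_diff_3)
  finally have "toeplitz_tail \<alpha> k = \<dots>" .
  moreover have "k - 1 + 2 = k + 1" "k - 1 + 1 = k"
    by simp_all
  ultimately show ?thesis
    by (simp add: half_row_sum_def diag_corr_def offdiag_corr_def fwd_diff_2 algebra_simps)
qed

lemma half_row_sum_pos:
  assumes "1 < \<alpha>" "\<alpha> < 2" "1 \<le> k"
  shows "0 < half_row_sum \<alpha> (real k)"
proof (cases "k = 1")
  case True
  have "(2::real) powr (2 - \<alpha>) < 2 powr 1"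
    using assms by (intro powr_less_mono) auto
  then show ?thesis
    using True assms by (simp add: half_row_sum_1)
next
  case False
  then have "2 \<le> real k"
    using assms by simp
  then show ?thesis
    using powr_third_fwd_diff_lt[of "3 - \<alpha>" "real k - 2"] assms
    by (simp add: half_row_sum_ge_2)
qed

(* The subtracted terms are the corrections of the missing neighbours j = 0 and j = N. *)

lemma bentry_row_sum:
  assumes "1 \<le> i" "i < N"
  shows "(\<Sum>j=1..N-1. bentry \<alpha> N i j) =
           half_row_sum \<alpha> (real i) + half_row_sum \<alpha> (real (N - i))
           - (if i = 1 then btil_off \<alpha> N 0 else 0) - (if i = N - 1 then btil_off \<alpha> N i else 0)"
proof -
  have "real (N - 1) + 1 - real i = real (N - i)"
    using assms by (simp add: of_nat_diff)
  then have toeplitz: "(\<Sum>j=1..N-1. toeplitz_coeff \<alpha> (real j - real i)) =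
      toeplitz_tail \<alpha> (real i) + toeplitz_tail \<alpha> (real (N - i))"
    by (simp only: toeplitz_sum)
  have diag: "(\<Sum>j=1..N-1. if j = i then btil_diag \<alpha> N i else 0) = btil_diag \<alpha> N i"
    using assms by simp
  have upper: "(\<Sum>j=1..N-1. if j = i + 1 then btil_off \<alpha> N i else 0) =
      btil_off \<alpha> N i - (if i = N - 1 then btil_off \<alpha> N i else 0)"
    using assms by auto
  have "(\<Sum>j=1..N-1. if i = j + 1 then btil_off \<alpha> N j else 0) =
      (\<Sum>j=1..N-1. if j = i - 1 then btil_off \<alpha> N j else 0)"
    using assms by (intro sum.cong) auto
  also have "\<dots> = btil_off \<alpha> N (i - 1) - (if i = 1 then btil_off \<alpha> N 0 else 0)"
    using assms by auto
  finally have lower: "(\<Sum>j=1..N-1. if i = j + 1 then btil_off \<alpha> N j else 0) = \<dots>" .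
  have "btil_diag \<alpha> N i + btil_off \<alpha> N i + btil_off \<alpha> N (i - 1)
      = 2 * diag_corr \<alpha> (real i) + offdiag_corr \<alpha> (real i) + offdiag_corr \<alpha> (real i - 1)
        + 2 * diag_corr \<alpha> (real (N - i)) + offdiag_corr \<alpha> (real (N - i))
        + offdiag_corr \<alpha> (real (N - i) - 1)"
    using assms by (simp add: btil_diag_eq btil_off_eq of_nat_diff algebra_simps)
  then show ?thesis
    unfolding bentry_eq_toeplitz sum.distrib toeplitz diag upper lower
    by (simp add: half_row_sum_def algebra_simps)
qed

lemma bentry_row_sum_pos:
  assumes "1 < \<alpha>" "\<alpha> < 2" "1 \<le> i" "i < N"
  shows "0 < (\<Sum>j=1..N-1. bentry \<alpha> N i j)"
proof -
  have "0 < half_row_sum \<alpha> (real i)" "0 < half_row_sum \<alpha> (real (N - i))"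
    using assms half_row_sum_pos[of \<alpha> i] half_row_sum_pos[of \<alpha> "N - i"] by auto
  moreover have "(if i = 1 then btil_off \<alpha> N 0 else 0) \<le> 0"
    "(if i = N - 1 then btil_off \<alpha> N i else 0) \<le> 0"
    using assms btil_off_neg[of \<alpha> 0 N] btil_off_neg[of \<alpha> i N] by auto
  ultimately show ?thesis
    unfolding bentry_row_sum[OF assms(3,4)] by linarith
qed

lemma diag_dominant_of_row_sum_pos:
  fixes b :: "'a \<Rightarrow> real"
  assumes "finite A" "i \<in> A" "\<And>j. j \<in> A - {i} \<Longrightarrow> b j \<le> 0" "0 < sum b A"
  shows "(\<Sum>j\<in>A - {i}. \<bar>b j\<bar>) < b i"
proof -
  have "(\<Sum>j\<in>A - {i}. \<bar>b j\<bar>) = - (\<Sum>j\<in>A - {i}. b j)"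
    using assms(3) by (simp add: sum_negf[symmetric])
  moreover have "sum b A = b i + (\<Sum>j\<in>A - {i}. b j)"
    using assms(1,2) by (simp add: sum.remove)
  ultimately show ?thesis
    using assms(4) by linarith
qed

theorem lemma3p3:
  fixes \<alpha> :: real and N :: nat
  assumes "1 < \<alpha>" "\<alpha> < 2" "N \<ge> 3"
  shows "(\<forall>i\<in>{1..N-1}. \<forall>j\<in>{1..N-1}. j \<noteq> i \<longrightarrow> bentry \<alpha> N i j < 0)
       \<and> (\<forall>i\<in>{1..N-2}. btil_off \<alpha> N i < 0)
       \<and> (\<forall>i\<in>{1..N-1}. btil_diag \<alpha> N i < 0)
       \<and> (\<forall>i\<in>{1..N-1}. (\<Sum>j=1..N-1. bentry \<alpha> N i j) > 0
            \<and> bentry \<alpha> N i i > (\<Sum>j\<in>{1..N-1}-{i}. \<bar>bentry \<alpha> N i j\<bar>)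
            \<and> (\<Sum>j\<in>{1..N-1}-{i}. \<bar>bentry \<alpha> N i j\<bar>) > 0)"
proof (intro conjI ballI impI)
  fix i j assume "i \<in> {1..N-1}" "j \<in> {1..N-1}" "j \<noteq> i"
  then show "bentry \<alpha> N i j < 0"
    using assms by (intro bentry_offdiag_neg) auto
next
  fix i assume "i \<in> {1..N-2}"
  then show "btil_off \<alpha> N i < 0"
    using assms by (intro btil_off_neg) auto
next
  fix i assume "i \<in> {1..N-1}"
  then show "btil_diag \<alpha> N i < 0"
    using assms by (intro btil_diag_neg) auto
next
  fix i assume i: "i \<in> {1..N-1}"
  have offdiag_neg: "bentry \<alpha> N i j < 0" if "j \<in> {1..N-1} - {i}" for j
    using that i assms by (intro bentry_offdiag_neg) auto
  show row_sum_pos: "0 < (\<Sum>j=1..N-1. bentry \<alpha> N i j)"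
    using i assms by (intro bentry_row_sum_pos) auto
  show "(\<Sum>j\<in>{1..N-1}-{i}. \<bar>bentry \<alpha> N i j\<bar>) < bentry \<alpha> N i i"
    using i row_sum_pos offdiag_neg by (intro diag_dominant_of_row_sum_pos) (auto intro: less_imp_le)
  have "\<exists>j. j \<in> {1..N-1} - {i}"
    using assms by (intro exI[of _ "if i = 1 then 2 else 1"]) auto
  then obtain j where j: "j \<in> {1..N-1} - {i}" ..
  then have "bentry \<alpha> N i j < 0"
    by (rule offdiag_neg)
  with j show "0 < (\<Sum>j\<in>{1..N-1}-{i}. \<bar>bentry \<alpha> N i j\<bar>)"
    by (intro sum_pos2[where i = j]) auto
qed

end
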